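(* $\mathrm{FindWS}_\mathcal{A} \equiv_W \mathrm{Det}_\mathcal{A} \equiv_W \mathrm{C}_{\{0,1\}^\mathbb{N}}$.
   Context: Represented spaces: a represented space is $(X,\delta_X)$ with $\delta_X:\subseteq\mathbb{N}^\mathbb{N}\to X$ a partial surjection. For a partial multivalued $f:\subseteq X\rightrightarrows Y$, a realizer is a partial $F:\subseteq\mathbb{N}^\mathbb{N}\to\mathbb{N}^\mathbb{N}$ with $\delta_Y(F(p))\in f(\delta_X(p))$ whenever $\delta_X(p)\in\mathrm{dom}(f)$. Weihrauch reducibility: $f\leq_W g$ iff there are computable partial $K,H:\subseteq\mathbb{N}^\mathbb{N}\to\mathbb{N}^\mathbb{N}$ such that for every realizer $G$ of $g$, the map $p\mapsto K(\langle p, G(H(p))\rangle)$ is a realizer of $f$; $\equiv_W$ is the induced equivalence. Open subsets of $\{0,1\}^\mathbb{N}$ are named by enumerations of words $w$ with $U=\bigcup w\{0,1\}^\mathbb{N}$; closed sets are named by names of their complements; $\mathcal{A}$ denotes the closed sets with this representation. $\mathrm{C}_{\{0,1\}^\mathbb{N}}$ (closed choice) maps a nonempty closed $A\subseteq\{0,1\}^\mathbb{N}$ to any element of $A$. Games: all games use choice set $\{0,1\}$. A win/lose game has two players (player 1 and player 2), a turn function $d:\{0,1\}^*\to\{1,2\}$ (given as a lookup table), and a winning set $W\subseteq\{0,1\}^\mathbb{N}$ for player 1 (player 2 wins on the complement). A strategy profile is a function $s:\{0,1\}^*\to\{0,1\}$ (identified with an element of $\{0,1\}^\mathbb{N}$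 via a computable bijection $\{0,1\}^*\cong\mathbb{N}$); player $i$'s strategy is its restriction to $d^{-1}(i)$; the induced play $p$ satisfies $p_n=s(p_{<n})$. A strategy of a player is winning if every play consistent with it is won by that player. For a represented pointclass $\Gamma$, $\mathrm{Det}_\Gamma$ takes a win/lose game whose winning set for player 1 is given by a $\Gamma$-name, and outputs any Nash equilibrium, i.e.~any strategy profile in which one of the two strategies is winning. $\mathrm{FindWS}_\Gamma$ is the restriction of $\mathrm{Det}_\Gamma$ to games in which player 1 has a winning strategy. *)

theory Defs
  imports Main "HOL-Library.Nat_Bijection"
begin

datatype recf = Zr | Sc | Proj nat | Comp recf "recf list" | Prim recf recf | Mu recf

inductive eval_rf :: "recf \<Rightarrow> nat list \<Rightarrow> nat \<Rightarrow> bool" where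
  zr: "eval_rf Zr xs 0"
| sc: "eval_rf Sc (x # xs) (Suc x)"
| proj: "i < length xs \<Longrightarrow> eval_rf (Proj i) xs (xs ! i)"
| comp: "list_all2 (\<lambda>g y. eval_rf g xs y) gs ys \<Longrightarrow> eval_rf f ys z \<Longrightarrow> eval_rf (Comp f gs) xs z"
| prim0: "eval_rf f xs y \<Longrightarrow> eval_rf (Prim f g) (0 # xs) y"
| primS: "eval_rf (Prim f g) (n # xs) y \<Longrightarrow> eval_rf g (n # y # xs) z \<Longrightarrow> eval_rf (Prim f g) (Suc n # xs) z"
| mu: "eval_rf f (y # xs) 0 \<Longrightarrow> (\<forall>z<y. \<exists>v. 0 < v \<and> eval_rf f (z # xs) v) \<Longrightarrow> eval_rf (Mu f) xs y"

definition comp_wordfun :: "(nat list \<Rightarrow> nat list) \<Rightarrow> bool" where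
  "comp_wordfun h \<longleftrightarrow> (\<exists>f. \<forall>xs. eval_rf f [list_encode xs] (list_encode (h xs)))"

type_synonym baire = "nat \<Rightarrow> nat"

definition pre :: "baire \<Rightarrow> nat \<Rightarrow> nat list" where
  "pre p n = map p [0..<n]"

definition computable_on :: "baire set \<Rightarrow> (baire \<Rightarrow> baire) \<Rightarrow> bool" where
  "computable_on D F \<longleftrightarrow> (\<exists>h. comp_wordfun h \<and>
     (\<forall>p\<in>D. (\<forall>n. h (pre p n) = pre (F p) (length (h (pre p n))))
            \<and> (\<forall>k. \<exists>n. k \<le> length (h (pre p n)))))"

definition pcomputable :: "(baire \<Rightarrow> baire option) \<Rightarrow> bool" where
  "pcomputable H \<longleftrightarrow> computable_on {p. H p \<noteq> None} (\<lambda>p. the (H p))"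

definition bpair :: "baire \<Rightarrow> baire \<Rightarrow> baire" where
  "bpair p q n = (if even n then p (n div 2) else q (n div 2))"

text \<open>A representation is a partial map from Baire space (None = not a name);
a multivalued partial function f has domain {x. f x \<noteq> {}}.\<close>
type_synonym 'a rep = "baire \<Rightarrow> 'a option"

definition realizer :: "'a rep \<Rightarrow> 'b rep \<Rightarrow> ('a \<Rightarrow> 'b set) \<Rightarrow> (baire \<Rightarrow> baire option) \<Rightarrow> bool" where
  "realizer \<delta>X \<delta>Y f F \<longleftrightarrow> (\<forall>p x. \<delta>X p = Some x \<and> f x \<noteq> {} \<longrightarrow>
      (\<exists>q y. F p = Some q \<and> \<delta>Y q = Some y \<and> y \<in> f x))"

definition W_le :: "'a rep \<Rightarrow> 'b rep \<Rightarrow> ('a \<Rightarrow> 'b set) \<Rightarrow> 'c rep \<Rightarrow> 'd rep \<Rightarrow> ('c \<Rightarrow> 'd set) \<Rightarrow> bool" where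
  "W_le \<delta>X \<delta>Y f \<delta>U \<delta>V g \<longleftrightarrow> (\<exists>K H. pcomputable K \<and> pcomputable H \<and>
     (\<forall>G. realizer \<delta>U \<delta>V g G \<longrightarrow>
        realizer \<delta>X \<delta>Y f (\<lambda>p. case H p of None \<Rightarrow> None | Some q \<Rightarrow>
                                (case G q of None \<Rightarrow> None | Some r \<Rightarrow> K (bpair p r)))))"

definition W_eq :: "'a rep \<Rightarrow> 'b rep \<Rightarrow> ('a \<Rightarrow> 'b set) \<Rightarrow> 'c rep \<Rightarrow> 'd rep \<Rightarrow> ('c \<Rightarrow> 'd set) \<Rightarrow> bool" where
  "W_eq \<delta>X \<delta>Y f \<delta>U \<delta>V g \<longleftrightarrow> W_le \<delta>X \<delta>Y f \<delta>U \<delta>V g \<and> W_le \<delta>U \<delta>V g \<delta>X \<delta>Y f"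

text \<open>Computable bijection between binary words and nat (bijective base-2 numeration).\<close>
definition bcode :: "bool list \<Rightarrow> nat" where
  "bcode w = foldl (\<lambda>n b. 2 * n + (if b then 2 else 1)) 0 w"

definition delta_C :: "(nat \<Rightarrow> bool) rep" where
  "delta_C p = (if \<forall>n. p n \<le> 1 then Some (\<lambda>n. p n = 1) else None)"

definition cyl :: "bool list \<Rightarrow> (nat \<Rightarrow> bool) set" where
  "cyl w = {x. \<forall>i<length w. x i = w ! i}"

text \<open>p enumerates words: p n = 0 means no word, p n = Suc (bcode w) enumerates w.
The named closed set is the complement of the union of the enumerated cylinders.\<close>
definition open_of :: "baire \<Rightarrow> (nat \<Rightarrow> bool) set" where
  "open_of p = \<Union>{cyl w | w. \<exists>n. p n = Suc (bcode w)}"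

definition delta_A :: "(nat \<Rightarrow> bool) set rep" where
  "delta_A p = Some (- open_of p)"

text \<open>Closed choice on Cantor space: nonempty closed A \<mapsto> any element of A.\<close>
definition CC :: "(nat \<Rightarrow> bool) set \<Rightarrow> (nat \<Rightarrow> bool) set" where
  "CC A = A"

datatype player = P1 | P2

type_synonym game = "(bool list \<Rightarrow> player) \<times> (nat \<Rightarrow> bool) set"
type_synonym profile = "bool list \<Rightarrow> bool"

text \<open>A game name is a pair of a lookup table for the turn function (values 1,2 at
position bcode w) and a closed-name of player 1's winning set.\<close>
definition delta_game :: "game rep" where
  "delta_game r = (if \<forall>n. r (2 * n) \<in> {1, 2}
     then Some ((\<lambda>w. if r (2 * bcode w) = 1 then P1 else P2), - open_of (\<lambda>n. r (2 * n + 1)))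
     else None)"

text \<open>Strategy profiles, identified with {0,1}^N via bcode.\<close>
definition delta_prof :: "profile rep" where
  "delta_prof p = (if \<forall>n. p n \<le> 1 then Some (\<lambda>w. p (bcode w) = 1) else None)"

definition consistent :: "(bool list \<Rightarrow> player) \<Rightarrow> profile \<Rightarrow> player \<Rightarrow> (nat \<Rightarrow> bool) \<Rightarrow> bool" where
  "consistent d s i x \<longleftrightarrow> (\<forall>n. d (map x [0..<n]) = i \<longrightarrow> x n = s (map x [0..<n]))"

definition wins :: "(nat \<Rightarrow> bool) set \<Rightarrow> player \<Rightarrow> (nat \<Rightarrow> bool) \<Rightarrow> bool" where
  "wins W i x \<longleftrightarrow> (if i = P1 then x \<in> W else x \<notin> W)"

text \<open>Player i's strategy (s restricted to d^-1(i)) is winning.\<close>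
definition winning :: "game \<Rightarrow> profile \<Rightarrow> player \<Rightarrow> bool" where
  "winning G s i \<longleftrightarrow> (\<forall>x. consistent (fst G) s i x \<longrightarrow> wins (snd G) i x)"

definition Det_A :: "game \<Rightarrow> profile set" where
  "Det_A G = {s. winning G s P1 \<or> winning G s P2}"

definition FindWS_A :: "game \<Rightarrow> profile set" where
  "FindWS_A G = (if \<exists>s. winning G s P1 then Det_A G else {})"

end

theory Submission
  imports Defs
begin

text \<open>
  The game-theoretic content is in two constructions.
  (1) From a game one computes a closed set whose points encode a Nash equilibrium:
      besides a strategy profile, a point records claims about the stages of player 2's
      attractor to the open complement of player 1's winning set, constrained by clopen
      local rules.  Every such point yields an equilibrium (player 2 wins if the root is
      attracted, otherwise player 1 avoids the attractor), and the true attractor stages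
      give such a point, so the set is nonempty.  This shows Det \<le> C.
  (2) A closed set A gives the solitaire game in which player 1 moves alone and wins on A;
      the play of any of its equilibria lies in A.  This shows C \<le> Det, and composing
      with (1) shows Det \<le> FindWS; FindWS \<le> Det is immediate.
\<close>
section \<open>Total recursive functions on the naturals\<close>

text \<open>The two arities of total recursive functions that the development needs;
everything of higher arity is handled through Cantor pairing.\<close>
definition rec1 :: "(nat \<Rightarrow> nat) \<Rightarrow> bool" where
  "rec1 f \<longleftrightarrow> (\<exists>F. \<forall>x. eval_rf F [x] (f x))"

definition rec2 :: "(nat \<Rightarrow> nat \<Rightarrow> nat) \<Rightarrow> bool" where
  "rec2 f \<longleftrightarrow> (\<exists>F. \<forall>x y. eval_rf F [x, y] (f x y))"

fun const_rf :: "nat \<Rightarrow> recf" where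
  "const_rf 0 = Zr"
| "const_rf (Suc n) = Comp Sc [const_rf n]"

lemma eval_const_rf: "eval_rf (const_rf n) xs n"
  by (induction n) (auto intro: eval_rf.intros)

lemma eval_comp1: "eval_rf G xs y \<Longrightarrow> eval_rf F [y] z \<Longrightarrow> eval_rf (Comp F [G]) xs z"
  by (rule eval_rf.comp[of _ _ "[y]"]) auto

lemma eval_comp2:
  "eval_rf G xs y \<Longrightarrow> eval_rf H xs y' \<Longrightarrow> eval_rf F [y, y'] z \<Longrightarrow> eval_rf (Comp F [G, H]) xs z"
  by (rule eval_rf.comp[of _ _ "[y, y']"]) auto

lemma rec1_const: "rec1 (\<lambda>x. c)"
  unfolding rec1_def using eval_const_rf by blast

lemma rec2_const: "rec2 (\<lambda>x y. c)"
  unfolding rec2_def using eval_const_rf by blast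

lemma rec1_id: "rec1 (\<lambda>x. x)"
  unfolding rec1_def using eval_rf.proj[of 0 "[_]"] by auto

lemma rec2_fst: "rec2 (\<lambda>x y. x)"
  unfolding rec2_def using eval_rf.proj[of 0 "[_, _]"] by auto

lemma rec2_snd: "rec2 (\<lambda>x y. y)"
  unfolding rec2_def using eval_rf.proj[of 1 "[_, _]"] by auto

lemma rec1_Suc: "rec1 Suc"
  unfolding rec1_def by (blast intro: eval_rf.sc)

lemma rec1_comp1:
  assumes "rec1 f" "rec1 a"
  shows "rec1 (\<lambda>x. f (a x))"
proof -
  obtain F A where F: "\<And>x. eval_rf F [x] (f x)" and A: "\<And>x. eval_rf A [x] (a x)"
    using assms unfolding rec1_def by blast
  have "eval_rf (Comp F [A]) [x] (f (a x))" for x by (rule eval_comp1[OF A F])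
  then show ?thesis unfolding rec1_def by blast
qed

lemma rec1_comp2:
  assumes "rec2 f" "rec1 a" "rec1 b"
  shows "rec1 (\<lambda>x. f (a x) (b x))"
proof -
  obtain F A B where F: "\<And>x y. eval_rf F [x, y] (f x y)" and A: "\<And>x. eval_rf A [x] (a x)"
    and B: "\<And>x. eval_rf B [x] (b x)"
    using assms unfolding rec1_def rec2_def by blast
  have "eval_rf (Comp F [A, B]) [x] (f (a x) (b x))" for x by (rule eval_comp2[OF A B F])
  then show ?thesis unfolding rec1_def by blast
qed

lemma rec2_comp1:
  assumes "rec1 f" "rec2 a"
  shows "rec2 (\<lambda>x y. f (a x y))"
proof -
  obtain F A where F: "\<And>x. eval_rf F [x] (f x)" and A: "\<And>x y. eval_rf A [x, y] (a x y)"
    using assms unfolding rec1_def rec2_def by blast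
  have "eval_rf (Comp F [A]) [x, y] (f (a x y))" for x y by (rule eval_comp1[OF A F])
  then show ?thesis unfolding rec2_def by blast
qed

lemma rec2_comp2:
  assumes "rec2 f" "rec2 a" "rec2 b"
  shows "rec2 (\<lambda>x y. f (a x y) (b x y))"
proof -
  obtain F A B where F: "\<And>x y. eval_rf F [x, y] (f x y)"
    and A: "\<And>x y. eval_rf A [x, y] (a x y)" and B: "\<And>x y. eval_rf B [x, y] (b x y)"
    using assms unfolding rec2_def by blast
  have "eval_rf (Comp F [A, B]) [x, y] (f (a x y) (b x y))" for x y by (rule eval_comp2[OF A B F])
  then show ?thesis unfolding rec2_def by blast
qed

lemma rec1_rec_nat:
  assumes "rec2 g"
  shows "rec1 (rec_nat c g)"
proof -
  obtain G where G: "\<And>x y. eval_rf G [x, y] (g x y)"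
    using assms unfolding rec2_def by blast
  have "eval_rf (Prim (const_rf c) G) [n] (rec_nat c g n)" for n
  proof (induction n)
    case 0
    show ?case using eval_rf.prim0[of "const_rf c" "[]"] eval_const_rf by simp
  next
    case (Suc n)
    show ?case using eval_rf.primS[of "const_rf c" G n "[]"] Suc G by simp
  qed
  then show ?thesis unfolding rec1_def by blast
qed

lemma rec2_funpow:
  assumes "rec1 T"
  shows "rec2 (\<lambda>n y. (T ^^ n) y)"
proof -
  obtain F where F: "\<And>x. eval_rf F [x] (T x)"
    using assms unfolding rec1_def by blast
  have "eval_rf (Prim (Proj 0) (Comp F [Proj 1])) [n, y] ((T ^^ n) y)" for n y
  proof (induction n)
    case 0
    show ?case using eval_rf.prim0[OF eval_rf.proj[of 0 "[y]"]] by simp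
  next
    case (Suc n)
    have "eval_rf (Comp F [Proj 1]) [n, (T ^^ n) y, y] (T ((T ^^ n) y))"
      using eval_comp1[OF eval_rf.proj[of 1 "[n, (T ^^ n) y, y]"] F] by simp
    then show ?case using eval_rf.primS[OF Suc] by simp
  qed
  then show ?thesis unfolding rec2_def by blast
qed

lemma rec2_add: "rec2 (+)"
proof -
  have "(Suc ^^ n) y = n + y" for n y by (induction n) auto
  then show ?thesis using rec2_funpow[OF rec1_Suc] by simp
qed

lemma rec1_pred: "rec1 (\<lambda>n. n - 1)"
proof -
  have "rec_nat 0 (\<lambda>k a. k) = (\<lambda>n. n - 1)"
    by (rule ext, rename_tac n, case_tac n) auto
  then show ?thesis using rec1_rec_nat[OF rec2_fst, of 0] by simp
qed

lemma rec2_diff: "rec2 (-)"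
proof -
  have "((\<lambda>n. n - 1) ^^ n) y = y - n" for n y by (induction n) auto
  then have "rec2 (\<lambda>n y. y - n)" using rec2_funpow[OF rec1_pred] by simp
  from rec2_comp2[OF this rec2_snd rec2_fst] show ?thesis by simp
qed

lemma rec2_mult: "rec2 (*)"
proof -
  obtain A where A: "\<And>x y. eval_rf A [x, y] (x + y)"
    using rec2_add unfolding rec2_def by blast
  have "eval_rf (Prim Zr (Comp A [Proj 1, Proj 2])) [n, y] (n * y)" for n y
  proof (induction n)
    case 0
    show ?case using eval_rf.prim0[OF eval_rf.zr[of "[y]"]] by simp
  next
    case (Suc n)
    have "eval_rf (Comp A [Proj 1, Proj 2]) [n, n * y, y] (n * y + y)"
      using eval_comp2[OF eval_rf.proj[of 1 "[n, n * y, y]"] eval_rf.proj[of 2 "[n, n * y, y]"]] A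
      by simp
    then show ?case using eval_rf.primS[OF Suc] by (simp add: add.commute)
  qed
  then show ?thesis unfolding rec2_def by blast
qed

lemma rec2_le: "rec2 (\<lambda>x y. if x \<le> y then 1 else 0)"
proof -
  have "rec2 (\<lambda>x y. 1 - (x - y))" by (rule rec2_comp2[OF rec2_diff rec2_const rec2_diff])
  moreover have "(\<lambda>x y. 1 - (x - y)) = (\<lambda>x y::nat. if x \<le> y then 1 else 0::nat)"
    by (auto simp: fun_eq_iff)
  ultimately show ?thesis by simp
qed

lemma rec1_triangle: "rec1 triangle"
proof -
  have "rec2 (\<lambda>k a. a + Suc k)"
    by (rule rec2_comp2[OF rec2_add rec2_snd rec2_comp1[OF rec1_Suc rec2_fst]])
  then have "rec1 (rec_nat 0 (\<lambda>k a. a + Suc k))" by (rule rec1_rec_nat)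
  moreover have "rec_nat 0 (\<lambda>k a. a + Suc k) = triangle"
    by (rule ext, rename_tac n, induct_tac n) auto
  ultimately show ?thesis by simp
qed

definition npair :: "nat \<Rightarrow> nat \<Rightarrow> nat" where "npair a b = prod_encode (a, b)"
definition nfst :: "nat \<Rightarrow> nat" where "nfst n = fst (prod_decode n)"
definition nsnd :: "nat \<Rightarrow> nat" where "nsnd n = snd (prod_decode n)"

lemma nfst_npair [simp]: "nfst (npair a b) = a"
  and nsnd_npair [simp]: "nsnd (npair a b) = b"
  by (simp_all add: nfst_def nsnd_def npair_def)

lemma nsnd_0 [simp]: "nsnd 0 = 0"
  by (simp add: nsnd_def prod_decode_def prod_decode_aux.simps)

lemma npair_ge: "a \<le> npair a b" "b \<le> npair a b"
  by (simp_all add: npair_def le_prod_encode_1 le_prod_encode_2)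

lemma npair_mono: "a \<le> c \<Longrightarrow> b \<le> d \<Longrightarrow> npair a b \<le> npair c d"
proof -
  assume "a \<le> c" "b \<le> d"
  moreover have "m \<le> n \<Longrightarrow> triangle m \<le> triangle n" for m n
    by (induction n) (auto simp: le_Suc_eq)
  ultimately show ?thesis by (simp add: npair_def prod_encode_def add_mono)
qed

text \<open>The index of the diagonal containing n: the largest s with triangle s \<le> n.
Computing it by primitive recursion makes the projections recursive.\<close>
definition diag :: "nat \<Rightarrow> nat" where
  "diag = rec_nat 0 (\<lambda>k s. s + (if triangle (Suc s) \<le> Suc k then 1 else 0))"

lemma diag_bounds: "triangle (diag n) \<le> n \<and> n < triangle (Suc (diag n))"
proof (induction n)
  case 0
  show ?case by (simp add: diag_def)
next
  case (Suc n)
  have "diag (Suc n) = diag n + (if triangle (Suc (diag n)) \<le> Suc n then 1 else 0)"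
    by (simp add: diag_def)
  then show ?case using Suc.IH by (cases "triangle (Suc (diag n)) \<le> Suc n") auto
qed

lemma rec1_diag: "rec1 diag"
proof -
  have "rec2 (\<lambda>k s. s + (if triangle (Suc s) \<le> Suc k then 1 else 0))"
    by (intro rec2_comp2[OF rec2_add rec2_snd] rec2_comp2[OF rec2_le]
        rec2_comp1[OF rec1_triangle] rec2_comp1[OF rec1_Suc] rec2_fst rec2_snd)
  then show ?thesis unfolding diag_def by (rule rec1_rec_nat)
qed

lemma prod_decode_diag: "prod_decode n = (n - triangle (diag n), diag n - (n - triangle (diag n)))"
proof -
  let ?s = "diag n" and ?a = "n - triangle (diag n)"
  have "triangle ?s \<le> n" "n < triangle ?s + Suc ?s" using diag_bounds[of n] by auto
  then have "prod_encode (?a, ?s - ?a) = n" by (simp add: prod_encode_def)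
  from arg_cong[OF this, of prod_decode] show ?thesis by simp
qed

named_theorems rec_intros

lemmas [rec_intros] = rec1_id rec1_const

lemma rec1_Suc_app [rec_intros]: "rec1 a \<Longrightarrow> rec1 (\<lambda>x. Suc (a x))" by (rule rec1_comp1[OF rec1_Suc])
lemma rec1_add [rec_intros]: "rec1 a \<Longrightarrow> rec1 b \<Longrightarrow> rec1 (\<lambda>x. a x + b x)" by (rule rec1_comp2[OF rec2_add])
lemma rec1_diff [rec_intros]: "rec1 a \<Longrightarrow> rec1 b \<Longrightarrow> rec1 (\<lambda>x. a x - b x)" by (rule rec1_comp2[OF rec2_diff])
lemma rec1_mult [rec_intros]: "rec1 a \<Longrightarrow> rec1 b \<Longrightarrow> rec1 (\<lambda>x. a x * b x)" by (rule rec1_comp2[OF rec2_mult])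

lemma rec1_npair [rec_intros]: "rec1 a \<Longrightarrow> rec1 b \<Longrightarrow> rec1 (\<lambda>x. npair (a x) (b x))"
proof -
  have "npair = (\<lambda>a b. triangle (a + b) + a)" by (simp add: fun_eq_iff npair_def prod_encode_def)
  then have "rec2 npair"
    using rec2_comp2[OF rec2_add rec2_comp1[OF rec1_triangle rec2_add] rec2_fst] by simp
  then show "rec1 a \<Longrightarrow> rec1 b \<Longrightarrow> ?thesis" by (rule rec1_comp2)
qed

lemma rec1_nfst [rec_intros]: "rec1 a \<Longrightarrow> rec1 (\<lambda>x. nfst (a x))"
proof -
  have "nfst = (\<lambda>n. n - triangle (diag n))" by (simp add: fun_eq_iff nfst_def prod_decode_diag)
  then have "rec1 nfst" using rec1_diff[OF rec1_id rec1_comp1[OF rec1_triangle rec1_diag]] by simp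
  then show "rec1 a \<Longrightarrow> ?thesis" by (rule rec1_comp1)
qed

lemma rec1_nsnd [rec_intros]: "rec1 a \<Longrightarrow> rec1 (\<lambda>x. nsnd (a x))"
proof -
  have "nsnd = (\<lambda>n. diag n - (n - triangle (diag n)))"
    by (simp add: fun_eq_iff nsnd_def prod_decode_diag)
  then have "rec1 nsnd"
    using rec1_diff[OF rec1_diag rec1_diff[OF rec1_id rec1_comp1[OF rec1_triangle rec1_diag]]] by simp
  then show "rec1 a \<Longrightarrow> ?thesis" by (rule rec1_comp1)
qed

definition recpred :: "(nat \<Rightarrow> bool) \<Rightarrow> bool" where
  "recpred P \<longleftrightarrow> rec1 (\<lambda>x. if P x then 1 else 0)"

lemma rec1_if [rec_intros]: "recpred P \<Longrightarrow> rec1 a \<Longrightarrow> rec1 b \<Longrightarrow> rec1 (\<lambda>x. if P x then a x else b x)"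
proof -
  assume "recpred P" "rec1 a" "rec1 b"
  then have "rec1 (\<lambda>x. (if P x then 1 else 0) * a x + (1 - (if P x then 1 else 0)) * b x)"
    unfolding recpred_def by (intro rec1_add rec1_mult rec1_diff rec1_const)
  moreover have "(\<lambda>x. (if P x then 1 else 0) * a x + (1 - (if P x then 1 else 0)) * b x)
      = (\<lambda>x. if P x then a x else b x)"
    by (simp add: fun_eq_iff)
  ultimately show ?thesis by simp
qed

lemma recpred_le [rec_intros]: "rec1 a \<Longrightarrow> rec1 b \<Longrightarrow> recpred (\<lambda>x. a x \<le> b x)"
  unfolding recpred_def by (rule rec1_comp2[OF rec2_le])

lemma recpred_not [rec_intros]: "recpred P \<Longrightarrow> recpred (\<lambda>x. \<not> P x)"
proof -
  assume "recpred P"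
  then have "rec1 (\<lambda>x. 1 - (if P x then 1 else 0))" unfolding recpred_def by (intro rec1_diff rec1_const)
  moreover have "(\<lambda>x. 1 - (if P x then 1 else 0)) = (\<lambda>x. if \<not> P x then 1 else (0::nat))"
    by (simp add: fun_eq_iff)
  ultimately show ?thesis unfolding recpred_def by simp
qed

lemma recpred_conj [rec_intros]: "recpred P \<Longrightarrow> recpred Q \<Longrightarrow> recpred (\<lambda>x. P x \<and> Q x)"
proof -
  assume "recpred P" "recpred Q"
  then have "rec1 (\<lambda>x. (if P x then 1 else 0) * (if Q x then 1 else 0))"
    unfolding recpred_def by (rule rec1_mult)
  moreover have "(\<lambda>x. (if P x then 1 else 0) * (if Q x then 1 else 0))
      = (\<lambda>x. if P x \<and> Q x then 1 else (0::nat))"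
    by (simp add: fun_eq_iff)
  ultimately show ?thesis unfolding recpred_def by simp
qed

lemma recpred_disj [rec_intros]: "recpred P \<Longrightarrow> recpred Q \<Longrightarrow> recpred (\<lambda>x. P x \<or> Q x)"
  using recpred_not[OF recpred_conj[OF recpred_not recpred_not]] by simp

lemma recpred_imp [rec_intros]: "recpred P \<Longrightarrow> recpred Q \<Longrightarrow> recpred (\<lambda>x. P x \<longrightarrow> Q x)"
  using recpred_disj[OF recpred_not] by simp

lemma recpred_iff [rec_intros]: "recpred P \<Longrightarrow> recpred Q \<Longrightarrow> recpred (\<lambda>x. P x \<longleftrightarrow> Q x)"
  using recpred_conj[OF recpred_imp recpred_imp, of P Q Q P] by (simp add: iff_conv_conj_imp)

lemma recpred_if [rec_intros]: "recpred P \<Longrightarrow> recpred Q \<Longrightarrow> recpred R \<Longrightarrow> recpred (\<lambda>x. if P x then Q x else R x)"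
  using recpred_disj[OF recpred_conj recpred_conj[OF recpred_not]] by (simp add: if_bool_eq_disj)

lemma recpred_less [rec_intros]: "rec1 a \<Longrightarrow> rec1 b \<Longrightarrow> recpred (\<lambda>x. a x < b x)"
  using recpred_le[OF rec1_Suc_app] by (simp add: Suc_le_eq)

lemma recpred_eq [rec_intros]: "rec1 a \<Longrightarrow> rec1 b \<Longrightarrow> recpred (\<lambda>x. a x = b x)"
  using recpred_conj[OF recpred_le recpred_le] by (simp add: order_eq_iff)

text \<open>Iterating a step function that may depend on the input: the step is given as a
recursive function of the paired input and state.\<close>
lemma rec1_funpow_param [rec_intros]:
  assumes S: "rec1 (\<lambda>p. S (nfst p) (nsnd p))" and N: "rec1 N" and I: "rec1 I"
  shows "rec1 (\<lambda>x. (S x ^^ N x) (I x))"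
proof -
  define T where "T p = npair (nfst p) (S (nfst p) (nsnd p))" for p
  have "rec1 T" unfolding T_def by (intro rec_intros S)
  have iterate: "(T ^^ n) (npair x a) = npair x ((S x ^^ n) a)" for n x a
    by (induction n) (auto simp: T_def)
  have "rec1 (\<lambda>x. nsnd ((T ^^ N x) (npair x (I x))))"
    by (intro rec_intros rec1_comp2[OF rec2_funpow[OF \<open>rec1 T\<close>]] N I)
  then show ?thesis by (simp add: iterate)
qed

lemma rec1_uncurry:
  assumes "rec1 (\<lambda>p. f (nfst p) (nsnd p))" "rec1 a" "rec1 b"
  shows "rec1 (\<lambda>x. f (a x) (b x))"
  using rec1_comp1[OF assms(1) rec1_npair[OF assms(2,3)]] by simp

lemma rec1_sum:
  assumes f: "rec1 (\<lambda>p. f (nfst p) (nsnd p))" and N: "rec1 N"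
  shows "rec1 (\<lambda>x. \<Sum>k<N x. f x k)"
proof -
  define S where "S x st = npair (Suc (nfst st)) (nsnd st + f x (nfst st))" for x st
  have iterate: "(S x ^^ n) (npair 0 0) = npair n (\<Sum>k<n. f x k)" for x n
    by (induction n) (auto simp: S_def)
  have "rec1 (\<lambda>p. f (nfst p) (nfst (nsnd p)))"
    by (rule rec1_uncurry[OF f]) (intro rec_intros)+
  then have "rec1 (\<lambda>x. nsnd ((S x ^^ N x) (npair 0 0)))"
    unfolding S_def by (intro rec_intros N)
  then show ?thesis by (simp add: iterate)
qed

lemma rec1_map_upt:
  assumes f: "rec1 (\<lambda>p. f (nfst p) (nsnd p))" and N: "rec1 N"
  shows "rec1 (\<lambda>x. list_encode (map (f x) [0..<N x]))"
proof -
  define S where "S x st = npair (nfst st - 1) (Suc (npair (f x (nfst st - 1)) (nsnd st)))" for x st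
  have iterate: "j \<le> n \<Longrightarrow> (S x ^^ j) (npair n 0) = npair (n - j) (list_encode (map (f x) [n - j..<n]))"
    for x n j
  proof (induction j)
    case (Suc j)
    then have "[n - Suc j..<n] = (n - Suc j) # [n - j..<n]" by (simp add: Suc_diff_Suc upt_conv_Cons)
    then show ?case using Suc by (simp add: S_def npair_def[symmetric])
  qed simp
  have "rec1 (\<lambda>p. f (nfst p) (nfst (nsnd p) - 1))"
    by (rule rec1_uncurry[OF f]) (intro rec_intros)+
  then have "rec1 (\<lambda>x. nsnd ((S x ^^ N x) (npair (N x) 0)))"
    unfolding S_def by (intro rec_intros N)
  then show ?thesis by (simp add: iterate)
qed

lemma rec1_div2 [rec_intros]: "rec1 a \<Longrightarrow> rec1 (\<lambda>x. a x div 2)"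
proof -
  define S where "S p = (if nsnd p = 1 then npair (Suc (nfst p)) 0 else npair (nfst p) 1)" for p
  have "(S ^^ n) (npair 0 0) = npair (n div 2) (n mod 2)" for n
    by (induction n) (auto simp: S_def mod_Suc div_Suc)
  moreover have "rec1 (\<lambda>n. nfst ((S ^^ n) (npair 0 0)))"
    unfolding S_def by (intro rec_intros rec1_funpow_param[where S = "\<lambda>_. _"])
  ultimately have "rec1 (\<lambda>n. n div 2)" by simp
  then show "rec1 a \<Longrightarrow> ?thesis" by (rule rec1_comp1)
qed

lemma recpred_even [rec_intros]: "rec1 a \<Longrightarrow> recpred (\<lambda>x. even (a x))"
proof -
  assume "rec1 a"
  then have "recpred (\<lambda>x. 2 * (a x div 2) = a x)" by (intro rec_intros)
  moreover have "2 * (n div 2) = n \<longleftrightarrow> even n" for n :: nat by presburger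
  ultimately show ?thesis by simp
qed

definition code_tl :: "nat \<Rightarrow> nat" where "code_tl c = nsnd (c - 1)"
definition code_hd :: "nat \<Rightarrow> nat" where "code_hd c = nfst (c - 1)"
definition code_nth :: "nat \<Rightarrow> nat \<Rightarrow> nat" where "code_nth c i = code_hd ((code_tl ^^ i) c)"
definition code_len :: "nat \<Rightarrow> nat" where
  "code_len c = (\<Sum>k<c. if (code_tl ^^ k) c = 0 then 0 else 1)"

lemma code_tl_list_encode: "code_tl (list_encode xs) = list_encode (tl xs)"
  by (cases xs) (auto simp: code_tl_def npair_def[symmetric])

lemma code_tl_iter: "(code_tl ^^ i) (list_encode xs) = list_encode (drop i xs)"
  by (induction i arbitrary: xs) (simp_all add: funpow_swap1 code_tl_list_encode drop_Suc tl_drop)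

lemma code_nth_list_encode: "i < length xs \<Longrightarrow> code_nth (list_encode xs) i = xs ! i"
  by (simp add: code_nth_def code_hd_def nfst_def code_tl_iter Cons_nth_drop_Suc[symmetric])

lemma length_le_list_encode: "length xs \<le> list_encode xs"
proof (induction xs)
  case (Cons x xs)
  then show ?case using le_prod_encode_2[of "list_encode xs" x] by simp
qed simp

lemma code_len_list_encode [simp]: "code_len (list_encode xs) = length xs"
proof -
  have "list_encode ys = 0 \<longleftrightarrow> ys = []" for ys by (cases ys) auto
  then have "code_len (list_encode xs) = (\<Sum>k<list_encode xs. if k < length xs then 1 else 0)"
    unfolding code_len_def code_tl_iter by (intro sum.cong) auto
  also have "\<dots> = card ({..<list_encode xs} \<inter> {..<length xs})" by (simp add: sum.If_cases lessThan_def)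
  also have "{..<list_encode xs} \<inter> {..<length xs} = {..<length xs}"
    using length_le_list_encode[of xs] by auto
  finally show ?thesis by simp
qed

lemma rec1_code_tl: "rec1 a \<Longrightarrow> rec1 (\<lambda>x. code_tl (a x))"
  unfolding code_tl_def by (intro rec_intros)

lemma rec1_code_tl_iter: "rec1 a \<Longrightarrow> rec1 b \<Longrightarrow> rec1 (\<lambda>x. (code_tl ^^ b x) (a x))"
  by (rule rec1_funpow_param[where S = "\<lambda>_. code_tl"]) (intro rec1_code_tl rec_intros)+

lemma rec1_code_nth [rec_intros]: "rec1 a \<Longrightarrow> rec1 b \<Longrightarrow> rec1 (\<lambda>x. code_nth (a x) (b x))"
  unfolding code_nth_def code_hd_def by (intro rec_intros rec1_code_tl_iter)

lemma rec1_code_len [rec_intros]: "rec1 a \<Longrightarrow> rec1 (\<lambda>x. code_len (a x))"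
proof -
  have "rec1 (\<lambda>p. if (code_tl ^^ nsnd p) (nfst p) = 0 then 0 else 1)"
    by (intro rec_intros rec1_code_tl_iter)
  then have "rec1 code_len" unfolding code_len_def by (rule rec1_sum[OF _ rec1_id])
  then show "rec1 a \<Longrightarrow> ?thesis" by (rule rec1_comp1)
qed

text \<open>In the numbering bcode a word w @ [b] has code 2 * bcode w + 1 or + 2, so the code
of the word without its last letter is (c - 1) div 2.  Iterating this recovers the
length and the letters of a word from its code, recursively.\<close>
definition word_parent :: "nat \<Rightarrow> nat" where "word_parent c = (c - 1) div 2"

definition word_len :: "nat \<Rightarrow> nat" where
  "word_len c = (\<Sum>k<c. if (word_parent ^^ k) c = 0 then 0 else 1)"

definition word_bit :: "nat \<Rightarrow> nat \<Rightarrow> bool" where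
  "word_bit c i \<longleftrightarrow> (let a = (word_parent ^^ (word_len c - Suc i)) c in a \<noteq> 0 \<and> even a)"

lemma bcode_Nil [simp]: "bcode [] = 0"
  by (simp add: bcode_def)

lemma bcode_snoc: "bcode (w @ [b]) = 2 * bcode w + (if b then 2 else 1)"
  by (simp add: bcode_def)

lemma bcode_eq_0: "bcode w = 0 \<longleftrightarrow> w = []"
  by (induction w rule: rev_induct) (auto simp: bcode_snoc)

lemma length_le_bcode: "length w \<le> bcode w"
  by (induction w rule: rev_induct) (auto simp: bcode_snoc)

lemma word_parent_snoc: "word_parent (bcode (w @ [b])) = bcode w"
  by (simp add: bcode_snoc word_parent_def)

lemma word_parent_iter: "(word_parent ^^ k) (bcode w) = bcode (take (length w - k) w)"
proof (induction k)
  case (Suc k)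
  show ?case
  proof (cases "k < length w")
    case True
    then have "length w - k = Suc (length w - Suc k)" by simp
    then have "take (length w - k) w = take (length w - Suc k) w @ [w ! (length w - Suc k)]"
      using True by (simp add: take_Suc_conv_app_nth)
    then show ?thesis using Suc.IH by (simp add: word_parent_snoc)
  next
    case False
    then show ?thesis using Suc.IH by (simp add: word_parent_def)
  qed
qed simp

lemma word_len_bcode [simp]: "word_len (bcode w) = length w"
proof -
  have "word_len (bcode w) = (\<Sum>k<bcode w. if k < length w then 1 else 0)"
    unfolding word_len_def word_parent_iter bcode_eq_0 by (intro sum.cong) auto
  also have "\<dots> = card ({..<bcode w} \<inter> {..<length w})" by (simp add: sum.If_cases lessThan_def)
  also have "{..<bcode w} \<inter> {..<length w} = {..<length w}" using length_le_bcode[of w] by auto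
  finally show ?thesis by simp
qed

lemma word_bit_bcode: "i < length w \<Longrightarrow> word_bit (bcode w) i = w ! i"
proof -
  assume i: "i < length w"
  then have "(word_parent ^^ (length w - Suc i)) (bcode w) = bcode (take i w @ [w ! i])"
    by (simp add: word_parent_iter take_Suc_conv_app_nth)
  then show ?thesis by (simp add: word_bit_def bcode_snoc)
qed

lemma rec1_word_parent_iter: "rec1 a \<Longrightarrow> rec1 b \<Longrightarrow> rec1 (\<lambda>x. (word_parent ^^ b x) (a x))"
  by (rule rec1_funpow_param[where S = "\<lambda>_. word_parent"]) (unfold word_parent_def, intro rec_intros)+

lemma rec1_word_parent [rec_intros]: "rec1 a \<Longrightarrow> rec1 (\<lambda>x. word_parent (a x))"
  unfolding word_parent_def by (intro rec_intros)

lemma rec1_word_len [rec_intros]: "rec1 a \<Longrightarrow> rec1 (\<lambda>x. word_len (a x))"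
proof -
  have "rec1 (\<lambda>p. if (word_parent ^^ nsnd p) (nfst p) = 0 then 0 else 1)"
    by (intro rec_intros rec1_word_parent_iter)
  then have "rec1 word_len" unfolding word_len_def by (rule rec1_sum[OF _ rec1_id])
  then show "rec1 a \<Longrightarrow> ?thesis" by (rule rec1_comp1)
qed

lemma recpred_word_bit [rec_intros]: "rec1 a \<Longrightarrow> rec1 b \<Longrightarrow> recpred (\<lambda>x. word_bit (a x) (b x))"
  unfolding word_bit_def Let_def by (intro rec_intros rec1_word_parent_iter)

section \<open>Computable total functions on Baire space\<close>

definition prefix_computes :: "(nat list \<Rightarrow> nat list) \<Rightarrow> (baire \<Rightarrow> baire) \<Rightarrow> bool" where
  "prefix_computes h F \<longleftrightarrow> comp_wordfun h
     \<and> (\<forall>p n. h (pre p n) = pre (F p) (length (h (pre p n))))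
     \<and> (\<forall>p m n. m \<le> n \<longrightarrow> length (h (pre p m)) \<le> length (h (pre p n)))
     \<and> (\<forall>p k. \<exists>n. k \<le> length (h (pre p n)))"

definition tcomputable :: "(baire \<Rightarrow> baire) \<Rightarrow> bool" where
  "tcomputable F \<longleftrightarrow> (\<exists>h. prefix_computes h F)"

lemma tcomputable_pcomputable: "tcomputable F \<Longrightarrow> pcomputable (\<lambda>p. Some (F p))"
  unfolding tcomputable_def prefix_computes_def pcomputable_def computable_on_def by auto

lemma length_pre [simp]: "length (pre p n) = n"
  by (simp add: pre_def)

lemma comp_wordfun_comp: "comp_wordfun h1 \<Longrightarrow> comp_wordfun h2 \<Longrightarrow> comp_wordfun (\<lambda>xs. h2 (h1 xs))"
  unfolding comp_wordfun_def by (metis eval_comp1)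

lemma prefix_computesD:
  assumes "prefix_computes h F"
  shows "comp_wordfun h"
    and "h (pre p n) = pre (F p) (length (h (pre p n)))"
    and "m \<le> n \<Longrightarrow> length (h (pre p m)) \<le> length (h (pre p n))"
    and "\<exists>n. k \<le> length (h (pre p n))"
  using assms unfolding prefix_computes_def by simp_all

lemma tcomputable_comp:
  assumes "tcomputable F1" "tcomputable F2"
  shows "tcomputable (\<lambda>p. F2 (F1 p))"
proof -
  obtain h1 h2 where h1: "prefix_computes h1 F1" and h2: "prefix_computes h2 F2"
    using assms unfolding tcomputable_def by blast
  note prefix1 = prefix_computesD(2)[OF h1]
  have "prefix_computes (\<lambda>xs. h2 (h1 xs)) (\<lambda>p. F2 (F1 p))"
    unfolding prefix_computes_def
  proof (intro conjI allI impI)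
    show "comp_wordfun (\<lambda>xs. h2 (h1 xs))"
      by (rule comp_wordfun_comp[OF prefix_computesD(1)[OF h1] prefix_computesD(1)[OF h2]])
    show "h2 (h1 (pre p n)) = pre (F2 (F1 p)) (length (h2 (h1 (pre p n))))" for p n
      by (subst (1 2) prefix1) (rule prefix_computesD(2)[OF h2])
    show "length (h2 (h1 (pre p m))) \<le> length (h2 (h1 (pre p n)))" if "m \<le> n" for p m n
      by (subst (1 2) prefix1) (rule prefix_computesD(3)[OF h2 prefix_computesD(3)[OF h1 that]])
    show "\<exists>n. k \<le> length (h2 (h1 (pre p n)))" for p k
    proof -
      obtain l where l: "k \<le> length (h2 (pre (F1 p) l))" using prefix_computesD(4)[OF h2] by blast
      obtain n where n: "l \<le> length (h1 (pre p n))" using prefix_computesD(4)[OF h1] by blast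
      have "k \<le> length (h2 (pre (F1 p) (length (h1 (pre p n)))))"
        using l prefix_computesD(3)[OF h2 n] by (rule le_trans)
      then show ?thesis by (subst (asm) prefix1[symmetric]) blast
    qed
  qed
  then show ?thesis unfolding tcomputable_def by blast
qed

lemma tcomputable_finite_use:
  fixes F :: "baire \<Rightarrow> baire" and L :: "nat \<Rightarrow> nat"
  assumes rec_F: "rec1 (\<lambda>q. F (code_nth (nfst q)) (nsnd q))" and rec_L: "rec1 L"
    and use: "\<And>p n i. i < L (list_encode (pre p n)) \<Longrightarrow> F (code_nth (list_encode (pre p n))) i = F p i"
    and mono: "\<And>p m n. m \<le> n \<Longrightarrow> L (list_encode (pre p m)) \<le> L (list_encode (pre p n))"
    and unbounded: "\<And>p k. \<exists>n. k \<le> L (list_encode (pre p n))"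
  shows "tcomputable F"
proof -
  define h where "h xs = map (F (code_nth (list_encode xs))) [0..<L (list_encode xs)]" for xs
  obtain R where R: "\<And>x. eval_rf R [x] (list_encode (map (F (code_nth x)) [0..<L x]))"
    using rec1_map_upt[OF rec_F rec_L] unfolding rec1_def by blast
  then have "comp_wordfun h" unfolding comp_wordfun_def h_def by blast
  moreover have "h (pre p n) = pre (F p) (length (h (pre p n)))" for p n
    unfolding h_def pre_def[of "F p"] using use by (intro map_cong) auto
  ultimately show ?thesis
    unfolding tcomputable_def prefix_computes_def using mono unbounded by (auto simp: h_def)
qed


lemma code_nth_pre: "i < n \<Longrightarrow> code_nth (list_encode (pre p n)) i = p i"
  by (simp add: code_nth_list_encode pre_def)

lemma tcomputable_id: "tcomputable (\<lambda>p. p)"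
proof (rule tcomputable_finite_use[where L = code_len])
  show "rec1 (\<lambda>q. code_nth (nfst q) (nsnd q))" by (intro rec_intros)
qed (auto intro: rec_intros simp: code_nth_pre)

definition odd_part :: "baire \<Rightarrow> baire" where "odd_part p i = p (2 * i + 1)"
definition even_part :: "baire \<Rightarrow> baire" where "even_part p i = p (2 * i)"

lemma odd_part_bpair [simp]: "odd_part (bpair p q) = q"
  and even_part_bpair [simp]: "even_part (bpair p q) = p"
  by (simp_all add: odd_part_def even_part_def bpair_def fun_eq_iff)

lemma tcomputable_odd_part: "tcomputable odd_part"
proof (rule tcomputable_finite_use[where L = "\<lambda>c. code_len c div 2"])
  show "rec1 (\<lambda>q. odd_part (code_nth (nfst q)) (nsnd q))"
    unfolding odd_part_def by (intro rec_intros)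
  show "rec1 (\<lambda>c. code_len c div 2)" by (intro rec_intros)
  show "\<exists>n. k \<le> code_len (list_encode (pre p n)) div 2" for p k
    by (rule exI[of _ "2 * k"]) simp
qed (auto intro: rec_intros simp: odd_part_def code_nth_pre div_le_mono)

lemma tcomputable_even_part: "tcomputable even_part"
proof (rule tcomputable_finite_use[where L = "\<lambda>c. (code_len c + 1) div 2"])
  show "rec1 (\<lambda>q. even_part (code_nth (nfst q)) (nsnd q))"
    unfolding even_part_def by (intro rec_intros)
  show "rec1 (\<lambda>c. (code_len c + 1) div 2)" by (intro rec_intros)
  show "\<exists>n. k \<le> (code_len (list_encode (pre p n)) + 1) div 2" for p k
    by (rule exI[of _ "2 * k"]) simp
qed (auto intro: rec_intros simp: even_part_def code_nth_pre div_le_mono)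

lemma W_le_by_tcomputable:
  assumes K: "tcomputable K" and H: "tcomputable H"
    and main: "\<And>p x. \<delta>X p = Some x \<Longrightarrow> f x \<noteq> {} \<Longrightarrow>
      \<exists>u. \<delta>U (H p) = Some u \<and> g u \<noteq> {} \<and>
        (\<forall>q v. \<delta>V q = Some v \<and> v \<in> g u \<longrightarrow> (\<exists>y. \<delta>Y (K (bpair p q)) = Some y \<and> y \<in> f x))"
  shows "W_le \<delta>X \<delta>Y f \<delta>U \<delta>V g"
  unfolding W_le_def
proof (intro exI conjI allI impI)
  show "pcomputable (\<lambda>p. Some (K p))" "pcomputable (\<lambda>p. Some (H p))"
    using K H by (simp_all add: tcomputable_pcomputable)
  fix G assume G: "realizer \<delta>U \<delta>V g G"
  show "realizer \<delta>X \<delta>Y f (\<lambda>p. case Some (H p) of None \<Rightarrow> None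
      | Some q \<Rightarrow> (case G q of None \<Rightarrow> None | Some r \<Rightarrow> Some (K (bpair p r))))"
    unfolding realizer_def
  proof (intro allI impI)
    fix p x assume "\<delta>X p = Some x \<and> f x \<noteq> {}"
    then obtain u where u: "\<delta>U (H p) = Some u" "g u \<noteq> {}"
      and solve: "\<forall>q v. \<delta>V q = Some v \<and> v \<in> g u \<longrightarrow> (\<exists>y. \<delta>Y (K (bpair p q)) = Some y \<and> y \<in> f x)"
      using main by blast
    obtain q v where "G (H p) = Some q" "\<delta>V q = Some v" "v \<in> g u"
      using G u unfolding realizer_def by blast
    then show "\<exists>q y. (case Some (H p) of None \<Rightarrow> None
      | Some q \<Rightarrow> (case G q of None \<Rightarrow> None | Some r \<Rightarrow> Some (K (bpair p r)))) = Some q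
        \<and> \<delta>Y q = Some y \<and> y \<in> f x"
      using solve by auto
  qed
qed

definition game_turn :: "baire \<Rightarrow> bool list \<Rightarrow> player" where
  "game_turn r w = (if r (2 * bcode w) = 1 then P1 else P2)"

definition game_open :: "baire \<Rightarrow> (nat \<Rightarrow> bool) set" where
  "game_open r = open_of (\<lambda>n. r (2 * n + 1))"

lemma delta_game_SomeD: "delta_game r = Some G \<Longrightarrow> G = (game_turn r, - game_open r)"
  by (auto simp: delta_game_def game_turn_def game_open_def fun_eq_iff split: if_splits)

lemma delta_prof_SomeD: "delta_prof q = Some v \<Longrightarrow> (\<forall>n. q n \<le> 1) \<and> v = (\<lambda>w. q (bcode w) = 1)"
  by (auto simp: delta_prof_def split: if_splits)

lemma prefix_in_cyl: "x \<in> cyl (map x [0..<n])"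
  by (simp add: cyl_def)

text \<open>A closed set A is turned into the game in which player 1 makes every move and
wins iff the play lies in A; he has a winning strategy iff A is nonempty, and in every
Nash equilibrium of it his play lies in A.\<close>
definition solitaire :: "baire \<Rightarrow> baire" where
  "solitaire p i = (if even i then 1 else p (i div 2))"

lemma delta_game_solitaire: "delta_game (solitaire p) = Some ((\<lambda>w. P1), - open_of p)"
proof -
  have "(\<lambda>n. solitaire p (2 * n + 1)) = p" by (simp add: solitaire_def fun_eq_iff)
  then show ?thesis by (simp add: delta_game_def solitaire_def)
qed

lemma tcomputable_solitaire: "tcomputable solitaire"
proof (rule tcomputable_finite_use[where L = "\<lambda>c. 2 * code_len c"])
  show "rec1 (\<lambda>q. solitaire (code_nth (nfst q)) (nsnd q))"
    unfolding solitaire_def by (intro rec_intros)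
  show "rec1 (\<lambda>c. 2 * code_len c)" by (intro rec_intros)
  show "\<exists>n. k \<le> 2 * code_len (list_encode (pre p n))" for p k
    by (rule exI[of _ k]) simp
qed (auto simp: solitaire_def code_nth_pre)

lemma solitaire_winning: "a \<in> A \<Longrightarrow> winning ((\<lambda>w. P1), A) (\<lambda>w. a (length w)) P1"
proof -
  assume "a \<in> A"
  moreover have "consistent (\<lambda>w. P1) (\<lambda>w. a (length w)) P1 y \<Longrightarrow> y = a" for y
    by (auto simp: fun_eq_iff consistent_def)
  ultimately show ?thesis by (auto simp: winning_def wins_def)
qed

lemma solitaire_equilibrium_play:
  assumes "A \<noteq> {}" and "s \<in> Det_A ((\<lambda>w. P1), A)" and play: "\<And>n. z n = s (map z [0..<n])"
  shows "z \<in> A"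
proof -
  obtain a where "a \<in> A" using assms(1) by blast
  moreover have "consistent (\<lambda>w. P1) s P2 a" by (simp add: consistent_def)
  ultimately have "\<not> winning ((\<lambda>w. P1), A) s P2" by (auto simp: winning_def wins_def)
  then have "winning ((\<lambda>w. P1), A) s P1" using assms(2) by (simp add: Det_A_def)
  moreover have "consistent (\<lambda>w. P1) s P1 z" using play by (simp add: consistent_def)
  ultimately show ?thesis by (simp add: winning_def wins_def)
qed

text \<open>For a profile named q, play_pos q k is the code of the position reached after k
moves: from code c the profile moves to the child 2 * c + 2 if q c = 1, else to 2 * c + 1.\<close>
definition play_step :: "baire \<Rightarrow> nat \<Rightarrow> nat" where
  "play_step q c = 2 * c + (if q c = 1 then 2 else 1)"

definition play_pos :: "baire \<Rightarrow> nat \<Rightarrow> nat" where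
  "play_pos q k = (play_step q ^^ k) 0"

definition play_bits :: "baire \<Rightarrow> baire" where
  "play_bits q k = (if q (play_pos q k) = 1 then 1 else 0)"

lemma play_pos_Suc: "play_pos q (Suc k) = play_step q (play_pos q k)"
  by (simp add: play_pos_def)

lemma strict_mono_play_pos: "strict_mono (play_pos q)"
  by (rule strict_mono_Suc_iff[THEN iffD2]) (simp add: play_pos_Suc play_step_def)

lemma play_pos_mono: "k \<le> l \<Longrightarrow> play_pos q k \<le> play_pos q l"
  using strict_mono_play_pos by (rule strict_mono_less_eq[THEN iffD2])

lemma play_pos_ge: "k \<le> play_pos q k"
  using strict_mono_play_pos by (rule strict_mono_imp_increasing)

lemma play_pos_agree:
  assumes "\<forall>j<n. q j = q' j" and "play_pos q k < n \<or> play_pos q' k < n"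
  shows "play_pos q k = play_pos q' k"
  using assms(2)
proof (induction k)
  case (Suc k)
  have "play_pos q k < n \<or> play_pos q' k < n"
    using Suc.prems by (auto simp: play_pos_Suc play_step_def)
  then have "play_pos q k = play_pos q' k" and "play_pos q k < n" using Suc.IH by auto
  then show ?case using assms(1) by (simp add: play_pos_Suc play_step_def)
qed (simp add: play_pos_def)

lemma bcode_play_bits: "bcode (map (\<lambda>k. play_bits q k = 1) [0..<n]) = play_pos q n"
proof (induction n)
  case (Suc n)
  then show ?case by (simp add: bcode_snoc play_pos_Suc play_step_def play_bits_def)
qed (simp add: play_pos_def)

lemma play_bits_play: "(play_bits q n = 1) = (q (bcode (map (\<lambda>k. play_bits q k = 1) [0..<n])) = 1)"
  by (simp only: bcode_play_bits) (simp add: play_bits_def)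

lemma play_bits_le_1: "play_bits q k \<le> 1"
  by (simp add: play_bits_def)

text \<open>The number of moves determined by the first n values of the profile.\<close>
definition moves_known :: "baire \<Rightarrow> nat \<Rightarrow> nat" where
  "moves_known q n = card {k. play_pos q k < n}"

lemma moves_known_finite: "{k. play_pos q k < n} \<subseteq> {..<n}"
  using play_pos_ge[of _ q] by (auto intro: le_less_trans)

lemma moves_known_less: "i < moves_known q n \<Longrightarrow> play_pos q i < n"
proof (rule ccontr)
  assume i: "i < moves_known q n" and "\<not> play_pos q i < n"
  have "k < i" if "play_pos q k < n" for k
  proof (rule ccontr)
    assume "\<not> k < i"
    then have "play_pos q i \<le> play_pos q k" by (simp add: play_pos_mono)
    then show False using that \<open>\<not> play_pos q i < n\<close> by simp
  qed
  then have "{k. play_pos q k < n} \<subseteq> {..<i}" by auto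
  then have "moves_known q n \<le> i" unfolding moves_known_def using card_mono[OF finite_lessThan] by fastforce
  then show False using i by simp
qed

lemma moves_known_mono: "m \<le> n \<Longrightarrow> moves_known q m \<le> moves_known q n"
  unfolding moves_known_def by (rule card_mono) (auto intro: finite_subset[OF moves_known_finite])

lemma moves_known_unbounded: "k \<le> moves_known q (Suc (play_pos q k))"
proof -
  have "{..<Suc k} \<subseteq> {j. play_pos q j < Suc (play_pos q k)}"
    using play_pos_mono[of _ k q] by (auto simp: less_Suc_eq_le)
  from card_mono[OF finite_subset[OF moves_known_finite finite_lessThan] this]
  show ?thesis unfolding moves_known_def by simp
qed

definition moves_known_code :: "nat \<Rightarrow> nat" where
  "moves_known_code c = (\<Sum>k<code_len c. if play_pos (code_nth c) k < code_len c then 1 else 0)"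

lemma moves_known_code_pre: "moves_known_code (list_encode (pre q n)) = moves_known q n"
proof -
  let ?q = "code_nth (list_encode (pre q n))"
  have agree: "\<forall>j<n. q j = ?q j" by (simp add: code_nth_pre)
  have "moves_known_code (list_encode (pre q n)) = card ({..<n} \<inter> {k. play_pos ?q k < n})"
    by (simp add: moves_known_code_def sum.If_cases)
  also have "{..<n} \<inter> {k. play_pos ?q k < n} = {k. play_pos q k < n}"
  proof -
    have "play_pos ?q k < n \<longleftrightarrow> play_pos q k < n" for k
      using play_pos_agree[OF agree, of k] by auto
    then show ?thesis using moves_known_finite[of q n] by auto
  qed
  finally show ?thesis by (simp add: moves_known_def)
qed

lemma tcomputable_play_bits: "tcomputable play_bits"
proof (rule tcomputable_finite_use[where L = moves_known_code])
  show "rec1 (\<lambda>p. play_bits (code_nth (nfst p)) (nsnd p))"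
    unfolding play_bits_def play_pos_def play_step_def
    by (intro rec_intros rec1_funpow_param[where S = "\<lambda>p c. 2 * c + (if code_nth (nfst p) c = 1 then 2 else 1)"])
  have "rec1 (\<lambda>p. if play_pos (code_nth (nfst p)) (nsnd p) < code_len (nfst p) then 1 else 0)"
    unfolding play_pos_def play_step_def
    by (intro rec_intros rec1_funpow_param[where S = "\<lambda>p c. 2 * c + (if code_nth (nfst p) c = 1 then 2 else 1)"])
  then show "rec1 moves_known_code"
    unfolding moves_known_code_def by (rule rec1_sum[OF _ rec1_code_len[OF rec1_id]])
  show "play_bits (code_nth (list_encode (pre q n))) i = play_bits q i"
    if "i < moves_known_code (list_encode (pre q n))" for q n i
  proof -
    let ?q = "code_nth (list_encode (pre q n))"
    have agree: "\<forall>j<n. q j = ?q j" by (simp add: code_nth_pre)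
    have known: "play_pos q i < n" using that moves_known_less by (simp add: moves_known_code_pre)
    then have "play_pos ?q i = play_pos q i" using play_pos_agree[OF agree] by metis
    then show ?thesis using known by (simp add: play_bits_def code_nth_pre)
  qed
  show "\<exists>n. k \<le> moves_known_code (list_encode (pre q n))" for q k
    using moves_known_unbounded by (auto simp: moves_known_code_pre)
qed (simp add: moves_known_code_pre moves_known_mono)

section \<open>Nash equilibria of a closed game as a closed set\<close>

text \<open>Node c (a code of a position) belongs to player 1 iff
r (2 * c) = 1, and the open set U won by player 2 is enumerated by the words with codes
r (2 * k + 1) - 1.  A point x of Cantor space is read as a candidate equilibrium:
\<^item> x (2 * c) is the move of the profile at node c;
\<^item> x (idx_hit t c) claims that one of the first t + 1 enumerated words is a prefix of c;
\<^item> x (idx_attr t c) claims that player 2 can force the play from c into these cylinders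
  within t moves (stage t of the attractor).
The local rules below pin down these claims and force both players to move optimally
with respect to the attractor stages; they are clopen conditions, so the set of
points satisfying all of them is closed, and it is nonempty.\<close>

definition child :: "nat \<Rightarrow> bool \<Rightarrow> nat" where
  "child c b = 2 * c + (if b then 2 else 1)"

lemma bcode_snoc_child: "bcode (w @ [b]) = child (bcode w) b"
  by (simp add: bcode_snoc child_def)

lemma word_parent_child [simp]: "word_parent (child c b) = c"
  by (simp add: child_def word_parent_def)

lemma rec1_child [rec_intros]: "rec1 a \<Longrightarrow> recpred P \<Longrightarrow> rec1 (\<lambda>x. child (a x) (P x))"
  unfolding child_def by (intro rec_intros)

definition idx_hit :: "nat \<Rightarrow> nat \<Rightarrow> nat" where "idx_hit t c = 4 * npair t c + 3"
definition idx_attr :: "nat \<Rightarrow> nat \<Rightarrow> nat" where "idx_attr t c = 4 * npair t c + 1"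

definition hit_rule :: "baire \<Rightarrow> (nat \<Rightarrow> bool) \<Rightarrow> nat \<Rightarrow> nat \<Rightarrow> bool" where
  "hit_rule r x t c \<longleftrightarrow> (x (idx_hit t c) \<longleftrightarrow>
     r (2 * t + 1) = Suc c \<or> (0 < t \<and> x (idx_hit (t - 1) c)) \<or> (0 < c \<and> x (idx_hit t (word_parent c))))"

definition attr_rule :: "baire \<Rightarrow> (nat \<Rightarrow> bool) \<Rightarrow> nat \<Rightarrow> nat \<Rightarrow> bool" where
  "attr_rule r x t c \<longleftrightarrow> (x (idx_attr t c) \<longleftrightarrow> x (idx_hit t c) \<or> (0 < t \<and> (x (idx_attr (t - 1) c) \<or>
     (if r (2 * c) = 1 then x (idx_attr (t - 1) (child c False)) \<and> x (idx_attr (t - 1) (child c True))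
      else x (idx_attr (t - 1) (child c False)) \<or> x (idx_attr (t - 1) (child c True))))))"

text \<open>Player 1 moves to a child that is attracted no earlier than the other one, player 2
to a child that is attracted no later.\<close>
definition choice_rule :: "baire \<Rightarrow> (nat \<Rightarrow> bool) \<Rightarrow> nat \<Rightarrow> nat \<Rightarrow> bool" where
  "choice_rule r x t c \<longleftrightarrow> (let chosen = x (idx_attr t (child c (x (2 * c))));
     other = x (idx_attr t (child c (\<not> x (2 * c)))) in
     if r (2 * c) = 1 then chosen \<longrightarrow> other else other \<longrightarrow> chosen)"

definition eq_constraints :: "baire \<Rightarrow> (nat \<Rightarrow> bool) \<Rightarrow> nat \<Rightarrow> nat \<Rightarrow> bool" where
  "eq_constraints r x t c \<longleftrightarrow> hit_rule r x t c \<and> attr_rule r x t c \<and> choice_rule r x t c"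

definition eq_witnesses :: "baire \<Rightarrow> (nat \<Rightarrow> bool) set" where
  "eq_witnesses r = {x. \<forall>t c. eq_constraints r x t c}"

definition strategy_of :: "(nat \<Rightarrow> bool) \<Rightarrow> profile" where
  "strategy_of x w = x (2 * bcode w)"

lemma eq_witnessesD:
  assumes "x \<in> eq_witnesses r"
  shows "hit_rule r x t c" "attr_rule r x t c" "choice_rule r x t c"
  using assms by (simp_all add: eq_witnesses_def eq_constraints_def)

lemma cyl_snoc_subset: "cyl (u @ [b]) \<subseteq> cyl u"
  by (auto simp: cyl_def nth_append)

lemma cyl_subset_game_open: "r (2 * k + 1) = Suc (bcode u) \<Longrightarrow> cyl u \<subseteq> game_open r"
  unfolding game_open_def open_of_def by blast

lemma map_upt_Suc_snoc: "map y [0..<Suc n] = map y [0..<n] @ [y n]"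
  by simp

lemma turn_of_prefix:
  "game_turn r (map y [0..<n]) = (if r (2 * bcode (map y [0..<n])) = 1 then P1 else P2)"
  by (simp add: game_turn_def)

lemma hit_in_open:
  assumes x: "x \<in> eq_witnesses r"
  shows "x (idx_hit t (bcode u)) \<Longrightarrow> cyl u \<subseteq> game_open r"
proof (induction "t + bcode u" arbitrary: t u rule: less_induct)
  case less
  have "r (2 * t + 1) = Suc (bcode u) \<or> (0 < t \<and> x (idx_hit (t - 1) (bcode u)))
      \<or> (0 < bcode u \<and> x (idx_hit t (word_parent (bcode u))))"
    using less.prems eq_witnessesD(1)[OF x, of t "bcode u"] unfolding hit_rule_def by simp
  then consider "r (2 * t + 1) = Suc (bcode u)" | "0 < t" "x (idx_hit (t - 1) (bcode u))"
    | "0 < bcode u" "x (idx_hit t (word_parent (bcode u)))"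
    by (elim disjE conjE) simp_all
  then show ?case
  proof cases
    case 1
    then show ?thesis by (rule cyl_subset_game_open)
  next
    case 2
    then show ?thesis using less.hyps[of "t - 1" u] by simp
  next
    case 3
    then have "u \<noteq> []" by auto
    then obtain u' b where u: "u = u' @ [b]" by (cases u rule: rev_cases) auto
    have "x (idx_hit t (bcode u'))" using 3 u by (simp add: bcode_snoc_child)
    moreover have "bcode u' < bcode u" using u by (simp add: bcode_snoc_child child_def)
    ultimately have "cyl u' \<subseteq> game_open r" using less.hyps[of t u'] by simp
    then show ?thesis using cyl_snoc_subset u by blast
  qed
qed

lemma attr_P2_wins:
  assumes x: "x \<in> eq_witnesses r" and cons: "consistent (game_turn r) (strategy_of x) P2 y"
  shows "x (idx_attr t (bcode (map y [0..<n]))) \<Longrightarrow> y \<in> game_open r"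
proof (induction t arbitrary: n)
  case 0
  then have "x (idx_hit 0 (bcode (map y [0..<n])))"
    using eq_witnessesD(2)[OF x] unfolding attr_rule_def by blast
  then show ?case using hit_in_open[OF x] prefix_in_cyl by blast
next
  case (Suc t)
  define c where "c = bcode (map y [0..<n])"
  have next_pos: "bcode (map y [0..<Suc n]) = child c (y n)"
    by (simp only: map_upt_Suc_snoc bcode_snoc_child c_def)
  have IH_child: "y \<in> game_open r" if "x (idx_attr t (child c (y n)))"
    using Suc.IH[of "Suc n"] that next_pos by simp
  have "x (idx_attr (Suc t) c)" using Suc.prems c_def by simp
  then have "x (idx_hit (Suc t) c) \<or> x (idx_attr t c)
      \<or> (r (2 * c) = 1 \<and> x (idx_attr t (child c False)) \<and> x (idx_attr t (child c True)))
      \<or> (r (2 * c) \<noteq> 1 \<and> (x (idx_attr t (child c False)) \<or> x (idx_attr t (child c True))))"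
    using eq_witnessesD(2)[OF x, of "Suc t" c] unfolding attr_rule_def
    by (cases "r (2 * c) = 1") simp_all
  then consider "x (idx_hit (Suc t) c)" | "x (idx_attr t c)"
    | "r (2 * c) = 1" "x (idx_attr t (child c False))" "x (idx_attr t (child c True))"
    | "r (2 * c) \<noteq> 1" "x (idx_attr t (child c False)) \<or> x (idx_attr t (child c True))"
    by (elim disjE conjE) simp_all
  then show ?case
  proof cases
    case 1
    then show ?thesis using hit_in_open[OF x] prefix_in_cyl unfolding c_def by blast
  next
    case 2
    then show ?thesis using Suc.IH c_def by blast
  next
    case 3
    then show ?thesis using IH_child by (cases "y n") simp_all
  next
    case 4
    then have "y n = x (2 * c)"
      using cons unfolding consistent_def strategy_of_def c_def by (auto simp: turn_of_prefix)
    moreover have "x (idx_attr t (child c (\<not> x (2 * c)))) \<longrightarrow> x (idx_attr t (child c (x (2 * c))))"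
      using 4(1) eq_witnessesD(3)[OF x, of t c] unfolding choice_rule_def by simp
    ultimately show ?thesis using 4(2) IH_child by (cases "y n") auto
  qed
qed

lemma P1_avoids_attr:
  assumes x: "x \<in> eq_witnesses r" and cons: "consistent (game_turn r) (strategy_of x) P1 y"
    and root: "\<forall>t. \<not> x (idx_attr t 0)"
  shows "\<not> x (idx_attr t (bcode (map y [0..<n])))"
proof (induction n arbitrary: t)
  case 0
  then show ?case using root by simp
next
  case (Suc n)
  define c where "c = bcode (map y [0..<n])"
  have safe: "\<not> x (idx_attr (Suc t) c)" using Suc.IH c_def by blast
  have "bcode (map y [0..<Suc n]) = child c (y n)"
    by (simp only: map_upt_Suc_snoc bcode_snoc_child c_def)
  moreover have "\<not> x (idx_attr t (child c (y n)))"
  proof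
    assume attracted: "x (idx_attr t (child c (y n)))"
    have "x (idx_attr t (child c False)) \<and> x (idx_attr t (child c True))" if "r (2 * c) = 1"
    proof -
      have "y n = x (2 * c)"
        using cons that unfolding consistent_def strategy_of_def c_def by (auto simp: turn_of_prefix)
      moreover have "x (idx_attr t (child c (x (2 * c)))) \<longrightarrow> x (idx_attr t (child c (\<not> x (2 * c))))"
        using that eq_witnessesD(3)[OF x, of t c] unfolding choice_rule_def by simp
      ultimately show ?thesis using attracted by (cases "y n") auto
    qed
    then have "x (idx_attr (Suc t) c)"
      using attracted eq_witnessesD(2)[OF x, of "Suc t" c] unfolding attr_rule_def
      by (cases "y n") auto
    then show False using safe by blast
  qed
  ultimately show ?case by simp
qed

theorem strategy_of_eq_witness:
  assumes x: "x \<in> eq_witnesses r"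
  shows "strategy_of x \<in> Det_A (game_turn r, - game_open r)"
proof (cases "\<exists>t. x (idx_attr t 0)")
  case True
  then obtain t where "x (idx_attr t 0)" by blast
  then have "winning (game_turn r, - game_open r) (strategy_of x) P2"
    unfolding winning_def wins_def using attr_P2_wins[OF x, of _ t 0] by auto
  then show ?thesis by (simp add: Det_A_def)
next
  case False
  then have root: "\<forall>t. \<not> x (idx_attr t 0)" by blast
  have "y \<notin> game_open r" if cons: "consistent (game_turn r) (strategy_of x) P1 y" for y
  proof
    assume "y \<in> game_open r"
    then obtain w k where hit: "r (2 * k + 1) = Suc (bcode w)" and "y \<in> cyl w"
      unfolding game_open_def open_of_def by auto
    then have prefix: "map y [0..<length w] = w" by (intro nth_equalityI) (auto simp: cyl_def)
    have "x (idx_hit k (bcode w))"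
      using hit eq_witnessesD(1)[OF x, of k "bcode w"] unfolding hit_rule_def by blast
    then have "x (idx_attr k (bcode w))"
      using eq_witnessesD(2)[OF x, of k "bcode w"] unfolding attr_rule_def by blast
    then show False using P1_avoids_attr[OF x cons root, of k "length w"] prefix by simp
  qed
  then have "winning (game_turn r, - game_open r) (strategy_of x) P1"
    unfolding winning_def wins_def by auto
  then show ?thesis by (simp add: Det_A_def)
qed

text \<open>The true values of the claims: some word enumerated by stage t is a prefix of c,
and the stages of player 2's attractor.\<close>
definition hit_true :: "baire \<Rightarrow> nat \<Rightarrow> nat \<Rightarrow> bool" where
  "hit_true r t c \<longleftrightarrow> (\<exists>k\<le>t. \<exists>j. r (2 * k + 1) = Suc ((word_parent ^^ j) c))"

fun attr_true :: "baire \<Rightarrow> nat \<Rightarrow> nat \<Rightarrow> bool" where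
  "attr_true r 0 c = hit_true r 0 c"
| "attr_true r (Suc t) c \<longleftrightarrow> hit_true r (Suc t) c \<or> attr_true r t c \<or>
    (if r (2 * c) = 1 then attr_true r t (child c False) \<and> attr_true r t (child c True)
     else attr_true r t (child c False) \<or> attr_true r t (child c True))"

definition choice_true :: "baire \<Rightarrow> nat \<Rightarrow> bool" where
  "choice_true r c \<longleftrightarrow> (if r (2 * c) = 1
     then \<forall>t. attr_true r t (child c True) \<longrightarrow> attr_true r t (child c False)
     else \<forall>t. attr_true r t (child c False) \<longrightarrow> attr_true r t (child c True))"

definition canonical :: "baire \<Rightarrow> nat \<Rightarrow> bool" where
  "canonical r i = (if even i then choice_true r (i div 2)
     else if i mod 4 = 1 then attr_true r (nfst (i div 4)) (nsnd (i div 4))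
     else hit_true r (nfst (i div 4)) (nsnd (i div 4)))"

lemma canonical_choice: "canonical r (2 * c) = choice_true r c"
  by (simp add: canonical_def)

lemma canonical_attr: "canonical r (idx_attr t c) = attr_true r t c"
proof -
  have "(4 * npair t c + 1) mod 4 = 1" "(4 * npair t c + 1) div 4 = npair t c" by simp_all
  then show ?thesis by (simp add: canonical_def idx_attr_def)
qed

lemma canonical_hit: "canonical r (idx_hit t c) = hit_true r t c"
proof -
  have "(4 * npair t c + 3) mod 4 = 3" "(4 * npair t c + 3) div 4 = npair t c" by simp_all
  then show ?thesis by (simp add: canonical_def idx_hit_def)
qed

lemma word_parent_funpow_0: "(word_parent ^^ j) 0 = 0"
  by (induction j) (auto simp: word_parent_def)

lemma hit_true_cases:
  assumes "hit_true r t c"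
  shows "r (2 * t + 1) = Suc c \<or> (0 < t \<and> hit_true r (t - 1) c) \<or> (0 < c \<and> hit_true r t (word_parent c))"
proof -
  obtain k j where k: "k \<le> t" and j: "r (2 * k + 1) = Suc ((word_parent ^^ j) c)"
    using assms unfolding hit_true_def by blast
  show ?thesis
  proof (cases "j = 0 \<or> c = 0")
    case True
    then have enum: "r (2 * k + 1) = Suc c" using j word_parent_funpow_0 by auto
    show ?thesis
    proof (cases "k = t")
      case False
      then have "k \<le> t - 1" "0 < t" using k by auto
      then have "hit_true r (t - 1) c" unfolding hit_true_def using enum by (metis funpow_0)
      then show ?thesis using \<open>0 < t\<close> by blast
    qed (use enum in simp)
  next
    case False
    then obtain j' where "j = Suc j'" and "0 < c" by (cases j) auto
    then have "r (2 * k + 1) = Suc ((word_parent ^^ j') (word_parent c))" using j by (simp add: funpow_swap1)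
    then show ?thesis unfolding hit_true_def using k \<open>0 < c\<close> by blast
  qed
qed

lemma hit_true_intros:
  "r (2 * t + 1) = Suc c \<Longrightarrow> hit_true r t c"
  "hit_true r (t - 1) c \<Longrightarrow> hit_true r t c"
  "hit_true r t (word_parent c) \<Longrightarrow> hit_true r t c"
proof -
  show "r (2 * t + 1) = Suc c \<Longrightarrow> hit_true r t c"
    unfolding hit_true_def by (metis funpow_0 order_refl)
  show "hit_true r (t - 1) c \<Longrightarrow> hit_true r t c"
    unfolding hit_true_def by (meson diff_le_self le_trans)
  show "hit_true r t (word_parent c) \<Longrightarrow> hit_true r t c"
    unfolding hit_true_def by (metis funpow_Suc_right comp_apply)
qed

lemma attr_true_mono: "attr_true r t c \<Longrightarrow> t \<le> t' \<Longrightarrow> attr_true r t' c"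
  by (induction t') (auto simp: le_Suc_eq)

lemma attr_true_unfold:
  "attr_true r t c \<longleftrightarrow> hit_true r t c \<or> (0 < t \<and> (attr_true r (t - 1) c \<or>
    (if r (2 * c) = 1 then attr_true r (t - 1) (child c False) \<and> attr_true r (t - 1) (child c True)
     else attr_true r (t - 1) (child c False) \<or> attr_true r (t - 1) (child c True))))"
  by (cases t) auto

text \<open>Two monotone properties of stages are comparable; this is why an optimal choice
between the two children exists at every node.\<close>
lemma monotone_comparable:
  fixes A B :: "nat \<Rightarrow> bool"
  assumes "\<And>t t'. A t \<Longrightarrow> t \<le> t' \<Longrightarrow> A t'" and "\<And>t t'. B t \<Longrightarrow> t \<le> t' \<Longrightarrow> B t'"
  shows "(\<forall>t. A t \<longrightarrow> B t) \<or> (\<forall>t. B t \<longrightarrow> A t)"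
proof (rule disjCI)
  assume "\<not> (\<forall>t. B t \<longrightarrow> A t)"
  then obtain t0 where "B t0" "\<not> A t0" by blast
  show "\<forall>t. A t \<longrightarrow> B t"
  proof (intro allI impI)
    fix t assume "A t"
    then have "\<not> t \<le> t0" using assms(1) \<open>\<not> A t0\<close> by blast
    then show "B t" using assms(2)[OF \<open>B t0\<close>] by simp
  qed
qed

lemma canonical_constraints: "eq_constraints r (canonical r) t c"
proof -
  have "hit_rule r (canonical r) t c"
    unfolding hit_rule_def canonical_hit using hit_true_cases hit_true_intros by blast
  moreover have "attr_rule r (canonical r) t c"
    unfolding attr_rule_def canonical_hit canonical_attr by (rule attr_true_unfold)
  moreover have "choice_rule r (canonical r) t c"
  proof (cases "choice_true r c")
    case True
    then have "if r (2 * c) = 1 then \<forall>t. attr_true r t (child c True) \<longrightarrow> attr_true r t (child c False)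
        else \<forall>t. attr_true r t (child c False) \<longrightarrow> attr_true r t (child c True)"
      unfolding choice_true_def .
    then show ?thesis using True
      unfolding choice_rule_def canonical_choice canonical_attr Let_def by (simp split: if_splits)
  next
    case False
    have "(\<forall>t. attr_true r t (child c True) \<longrightarrow> attr_true r t (child c False))
        \<or> (\<forall>t. attr_true r t (child c False) \<longrightarrow> attr_true r t (child c True))"
      by (rule monotone_comparable) (blast intro: attr_true_mono)+
    then have "if r (2 * c) = 1 then \<forall>t. attr_true r t (child c False) \<longrightarrow> attr_true r t (child c True)
        else \<forall>t. attr_true r t (child c True) \<longrightarrow> attr_true r t (child c False)"
      using False unfolding choice_true_def by (auto split: if_splits)
    then show ?thesis using False
      unfolding choice_rule_def canonical_choice canonical_attr Let_def by (simp split: if_splits)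
  qed
  ultimately show ?thesis unfolding eq_constraints_def by blast
qed

theorem eq_witnesses_nonempty: "canonical r \<in> eq_witnesses r"
  unfolding eq_witnesses_def using canonical_constraints by blast

text \<open>Every index read by the constraints at (t, c) is at most constraint_bound t c.\<close>
definition constraint_bound :: "nat \<Rightarrow> nat \<Rightarrow> nat" where
  "constraint_bound t c = 4 * npair t (2 * c + 2) + 3"

lemma eq_constraints_cong_witness:
  assumes agree: "\<And>i. i \<le> constraint_bound t c \<Longrightarrow> x i = y i"
  shows "eq_constraints r x t c = eq_constraints r y t c"
proof -
  have child_le: "child c b \<le> 2 * c + 2" for b by (simp add: child_def)
  have "word_parent c \<le> 2 * c + 2" "c \<le> 2 * c + 2" by (simp_all add: word_parent_def)
  then have le_bound: "npair t' c' \<le> npair t (2 * c + 2)"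
    if "t' \<le> t" "c' \<in> {c, word_parent c, child c False, child c True}" for t' c'
    using that child_le by (auto intro!: npair_mono)
  have "2 * c \<le> constraint_bound t c"
    using npair_ge(2)[of "2 * c + 2" t] by (simp add: constraint_bound_def)
  then have move: "x (2 * c) = y (2 * c)" using agree by blast
  have "idx_hit t' c' \<le> constraint_bound t c" "idx_attr t' c' \<le> constraint_bound t c"
    if "t' \<le> t" "c' \<in> {c, word_parent c, child c False, child c True}" for t' c'
    using le_bound[OF that] by (simp_all add: idx_hit_def idx_attr_def constraint_bound_def)
  then have "x (idx_hit t' c') = y (idx_hit t' c')" "x (idx_attr t' c') = y (idx_attr t' c')"
    if "t' \<le> t" "c' \<in> {c, word_parent c, child c False, child c True}" for t' c'
    using agree that by blast+
  then show ?thesis using move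
    unfolding eq_constraints_def hit_rule_def attr_rule_def choice_rule_def Let_def
    by (cases "x (2 * c)") simp_all
qed

lemma eq_constraints_cong_name:
  "r (2 * t + 1) = r' (2 * t + 1) \<Longrightarrow> r (2 * c) = r' (2 * c) \<Longrightarrow>
    eq_constraints r x t c = eq_constraints r' x t c"
  unfolding eq_constraints_def hit_rule_def attr_rule_def choice_rule_def by simp

text \<open>Position m of the name enumerates the code w of a word violating the constraints at
(t, c), where m encodes a padding, t, c and w; the padding lets m exceed the positions
2 * t + 1 and 2 * c of the game name that the constraints read.\<close>
definition witness_name :: "baire \<Rightarrow> baire" where
  "witness_name r m = (let t = nfst (nsnd m); c = nfst (nsnd (nsnd m)); w = nsnd (nsnd (nsnd m)) in
     if 2 * t + 1 < m \<and> 2 * c < m \<and> constraint_bound t c < word_len w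
        \<and> \<not> eq_constraints r (word_bit w) t c
     then Suc w else 0)"

theorem open_of_witness_name: "open_of (witness_name r) = - eq_witnesses r"
proof (intro equalityI subsetI)
  fix x assume "x \<in> open_of (witness_name r)"
  then obtain w m where m: "witness_name r m = Suc (bcode w)" and "x \<in> cyl w"
    unfolding open_of_def by blast
  define t where "t = nfst (nsnd m)"
  define c where "c = nfst (nsnd (nsnd m))"
  have long: "constraint_bound t c < length w" and bad: "\<not> eq_constraints r (word_bit (bcode w)) t c"
    using m unfolding witness_name_def t_def c_def Let_def by (auto split: if_splits)
  have "eq_constraints r (word_bit (bcode w)) t c = eq_constraints r x t c"
  proof (rule eq_constraints_cong_witness)
    fix i assume "i \<le> constraint_bound t c"
    then show "word_bit (bcode w) i = x i"
      using long \<open>x \<in> cyl w\<close> by (simp add: word_bit_bcode cyl_def)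
  qed
  then show "x \<in> - eq_witnesses r" using bad by (auto simp: eq_witnesses_def)
next
  fix x assume "x \<in> - eq_witnesses r"
  then obtain t c where bad: "\<not> eq_constraints r x t c" by (auto simp: eq_witnesses_def)
  define w where "w = map x [0..<Suc (constraint_bound t c)]"
  define m where "m = npair (2 * t + 2 * c + 2) (npair t (npair c (bcode w)))"
  have "2 * t + 2 * c + 2 \<le> m" unfolding m_def by (rule npair_ge)
  moreover have "eq_constraints r (word_bit (bcode w)) t c = eq_constraints r x t c"
    by (rule eq_constraints_cong_witness) (simp add: w_def word_bit_bcode del: upt_Suc)
  ultimately have "witness_name r m = Suc (bcode w)"
    using bad by (simp add: witness_name_def m_def w_def Let_def del: upt_Suc)
  moreover have "x \<in> cyl w" unfolding w_def by (rule prefix_in_cyl)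
  ultimately show "x \<in> open_of (witness_name r)" unfolding open_of_def by blast
qed

lemma delta_A_witness_name: "delta_A (witness_name r) = Some (eq_witnesses r)"
  by (simp add: delta_A_def open_of_witness_name)

lemma recpred_const [rec_intros]: "recpred (\<lambda>x. b)"
  unfolding recpred_def by (rule rec1_const)

lemma tcomputable_witness_name: "tcomputable witness_name"
proof (rule tcomputable_finite_use[where L = code_len])
  show "rec1 (\<lambda>q. witness_name (code_nth (nfst q)) (nsnd q))"
    unfolding witness_name_def eq_constraints_def hit_rule_def attr_rule_def choice_rule_def
      Let_def constraint_bound_def idx_hit_def idx_attr_def
    by (intro rec_intros)
  show "witness_name (code_nth (list_encode (pre r n))) m = witness_name r m"
    if "m < code_len (list_encode (pre r n))" for r n m
  proof -
    let ?t = "nfst (nsnd m)" and ?c = "nfst (nsnd (nsnd m))"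
    have "eq_constraints (code_nth (list_encode (pre r n))) y ?t ?c = eq_constraints r y ?t ?c"
      if "2 * ?t + 1 < m" "2 * ?c < m" for y
      using that \<open>m < _\<close> by (intro eq_constraints_cong_name) (simp_all add: code_nth_pre)
    then show ?thesis unfolding witness_name_def Let_def by auto
  qed
  show "\<exists>n. k \<le> code_len (list_encode (pre r n))" for r k
    by (rule exI[of _ k]) simp
qed (auto intro: rec_intros)

lemma solitaire_solution_play:
  assumes "A \<noteq> {}" and "delta_prof q = Some s" and "s \<in> Det_A ((\<lambda>w. P1), A)"
  shows "(\<lambda>k. play_bits q k = 1) \<in> A"
proof (rule solitaire_equilibrium_play[OF assms(1,3)])
  show "(play_bits q n = 1) = s (map (\<lambda>k. play_bits q k = 1) [0..<n])" for n
    using delta_prof_SomeD[OF assms(2)] by (subst play_bits_play) simp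
qed

lemma delta_C_play_bits: "delta_C (play_bits q) = Some (\<lambda>k. play_bits q k = 1)"
  using play_bits_le_1 by (simp add: delta_C_def)

lemma delta_prof_even_part:
  "(\<forall>n. q n \<le> 1) \<Longrightarrow> delta_prof (even_part q) = Some (strategy_of (\<lambda>n. q n = 1))"
  by (simp add: delta_prof_def even_part_def strategy_of_def fun_eq_iff)

lemma FindWS_le_Det: "W_le delta_game delta_prof FindWS_A delta_game delta_prof Det_A"
proof (rule W_le_by_tcomputable[OF tcomputable_odd_part tcomputable_id])
  fix p G assume "delta_game p = Some G" "FindWS_A G \<noteq> {}"
  moreover from this have "FindWS_A G = Det_A G" by (auto simp: FindWS_A_def split: if_splits)
  ultimately show "\<exists>u. delta_game p = Some u \<and> Det_A u \<noteq> {} \<and> (\<forall>q s. delta_prof q = Some s \<and> s \<in> Det_A u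
      \<longrightarrow> (\<exists>y. delta_prof (odd_part (bpair p q)) = Some y \<and> y \<in> FindWS_A G))"
    by auto
qed

lemma Det_le_CC: "W_le delta_game delta_prof Det_A delta_A delta_C CC"
proof (rule W_le_by_tcomputable[OF tcomputable_comp[OF tcomputable_odd_part tcomputable_even_part]
      tcomputable_witness_name])
  fix r G assume "delta_game r = Some G"
  then have G: "G = (game_turn r, - game_open r)" by (rule delta_game_SomeD)
  have "\<exists>y. delta_prof (even_part (odd_part (bpair r q))) = Some y \<and> y \<in> Det_A G"
    if "delta_C q = Some x" "x \<in> CC (eq_witnesses r)" for q x
  proof -
    have "\<forall>n. q n \<le> 1" and "x = (\<lambda>n. q n = 1)"
      using that(1) by (auto simp: delta_C_def split: if_splits)
    then have "delta_prof (even_part q) = Some (strategy_of x)"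
      by (simp add: delta_prof_even_part)
    moreover have "strategy_of x \<in> Det_A G"
      using strategy_of_eq_witness that(2) G by (simp add: CC_def)
    ultimately show ?thesis by auto
  qed
  moreover have "CC (eq_witnesses r) \<noteq> {}" using eq_witnesses_nonempty by (auto simp: CC_def)
  ultimately show "\<exists>u. delta_A (witness_name r) = Some u \<and> CC u \<noteq> {} \<and> (\<forall>q x. delta_C q = Some x \<and> x \<in> CC u
      \<longrightarrow> (\<exists>y. delta_prof (even_part (odd_part (bpair r q))) = Some y \<and> y \<in> Det_A G))"
    using delta_A_witness_name by blast
qed

lemma CC_le_Det: "W_le delta_A delta_C CC delta_game delta_prof Det_A"
proof (rule W_le_by_tcomputable[OF tcomputable_comp[OF tcomputable_odd_part tcomputable_play_bits]
      tcomputable_solitaire])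
  fix p A assume "delta_A p = Some A" "CC A \<noteq> {}"
  then have A: "A = - open_of p" "A \<noteq> {}" by (auto simp: delta_A_def CC_def)
  then obtain a where "a \<in> A" by blast
  then have "Det_A ((\<lambda>w. P1), A) \<noteq> {}"
    using solitaire_winning by (auto simp: Det_A_def)
  moreover have "\<exists>y. delta_C (play_bits (odd_part (bpair p q))) = Some y \<and> y \<in> CC A"
    if "delta_prof q = Some s" "s \<in> Det_A ((\<lambda>w. P1), A)" for q s
    using solitaire_solution_play[OF A(2) that] delta_C_play_bits by (simp add: CC_def)
  ultimately show "\<exists>u. delta_game (solitaire p) = Some u \<and> Det_A u \<noteq> {} \<and> (\<forall>q s. delta_prof q = Some s \<and> s \<in> Det_A u
      \<longrightarrow> (\<exists>y. delta_C (play_bits (odd_part (bpair p q))) = Some y \<and> y \<in> CC A))"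
    using delta_game_solitaire A(1) by auto
qed

text \<open>Det reduces to FindWS through the solitaire game on the set of equilibrium
witnesses, in which player 1 has a winning strategy.\<close>
lemma Det_le_FindWS: "W_le delta_game delta_prof Det_A delta_game delta_prof FindWS_A"
proof (rule W_le_by_tcomputable[OF
      tcomputable_comp[OF tcomputable_comp[OF tcomputable_odd_part tcomputable_play_bits] tcomputable_even_part]
      tcomputable_comp[OF tcomputable_witness_name tcomputable_solitaire]])
  fix r G assume "delta_game r = Some G"
  then have G: "G = (game_turn r, - game_open r)" by (rule delta_game_SomeD)
  let ?S = "((\<lambda>w. P1), eq_witnesses r)"
  have "delta_game (solitaire (witness_name r)) = Some ?S"
    using delta_game_solitaire by (simp add: open_of_witness_name)
  moreover have "FindWS_A ?S = Det_A ?S" and "Det_A ?S \<noteq> {}"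
    using solitaire_winning[OF eq_witnesses_nonempty] by (auto simp: FindWS_A_def Det_A_def)
  moreover have "\<exists>y. delta_prof (even_part (play_bits (odd_part (bpair r q)))) = Some y \<and> y \<in> Det_A G"
    if "delta_prof q = Some s" "s \<in> Det_A ?S" for q s
  proof -
    have "(\<lambda>k. play_bits q k = 1) \<in> eq_witnesses r"
      using solitaire_solution_play[OF _ that] eq_witnesses_nonempty by blast
    then have "strategy_of (\<lambda>k. play_bits q k = 1) \<in> Det_A G"
      using strategy_of_eq_witness G by simp
    moreover have "delta_prof (even_part (play_bits q)) = Some (strategy_of (\<lambda>k. play_bits q k = 1))"
      using play_bits_le_1 by (simp add: delta_prof_even_part)
    ultimately show ?thesis by simp
  qed
  ultimately show "\<exists>u. delta_game (solitaire (witness_name r)) = Some u \<and> FindWS_A u \<noteq> {} \<and>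
      (\<forall>q s. delta_prof q = Some s \<and> s \<in> FindWS_A u
        \<longrightarrow> (\<exists>y. delta_prof (even_part (play_bits (odd_part (bpair r q)))) = Some y \<and> y \<in> Det_A G))"
    by auto
qed

theorem theorem9:
  shows "W_eq delta_game delta_prof FindWS_A delta_game delta_prof Det_A
       \<and> W_eq delta_game delta_prof Det_A delta_A delta_C CC"
  unfolding W_eq_def using FindWS_le_Det Det_le_FindWS Det_le_CC CC_le_Det by blast

end
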